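(* Let $(\omega_n)_{n\ge1}$ be nonzero complex numbers with $\liminf_{n\to\infty}(\operatorname{Re}\omega_{n+1}-\operatorname{Re}\omega_n)=\gamma>0$ and $(\operatorname{Im}\omega_n)$ bounded, and let $(c_n)$ be complex numbers with $|c_n|\le M/|\omega_n|$ for all $n$, for some $M>0$. Then for every $\varepsilon\in(0,1)$ and every $T>\frac{2\pi}{\gamma\sqrt{1-\varepsilon}}$ there exists $n_0=n_0(\varepsilon)\in\mathbb{N}$, independent of $T$ and of $(C_n)$, such that for every complex sequence $(C_n)$ with $\sum|C_n|^2<\infty$, $$\int_0^\infty k(t)\Big(\Big|\sum_{n=n_0}^\infty C_ne^{i\omega_nt}+\overline{C_n}e^{-i\overline{\omega_n}t}\Big|^2-2\Big|\sum_{n=n_0}^\infty c_nC_ne^{i\omega_nt}+\overline{c_nC_n}e^{-i\overline{\omega_n}t}\Big|^2\Big)dt$$ $$\ge 2\pi T\sum_{n=n_0}^\infty\Big(\frac{1-\varepsilon}{\pi^2+4T^2(\operatorname{Im}\omega_n)^2}-\frac{4(1+\varepsilon)}{T^2\gamma^2}\Big)(1+e^{-2\operatorname{Im}\omega_nT})|C_n|^2 .$$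
   Context: For $T>0$, $k(t):=\sin(\pi t/T)$ for $t\in[0,T]$ and $k(t):=0$ otherwise. *)

theory Defs
  imports "HOL-Analysis.Analysis"
begin

definition kfun :: "real \<Rightarrow> real \<Rightarrow> real" where
  "kfun T t = (if 0 \<le> t \<and> t \<le> T then sin (pi * t / T) else 0)"

definition psum :: "(nat \<Rightarrow> complex) \<Rightarrow> (nat \<Rightarrow> complex) \<Rightarrow> nat \<Rightarrow> nat \<Rightarrow> real \<Rightarrow> complex" where
  "psum w D n0 N t = (\<Sum>n\<in>{n0..<N}. D n * exp (\<i> * w n * of_real t)
                          + cnj (D n) * exp (- \<i> * cnj (w n) * of_real t))"

end

theory Submission
  imports Defs
begin

(* With b = pi/T, the transform K(z) = integral_0^T sin(pi t/T) e^(izt) dt equals b (1 + e^(izT)) / (b^2 - z^2).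
   Expanding |psum D|^2 turns the weighted integral into the quadratic form
     2 Re sum_{n,m} (D_n conj(D_m) K(w_n - conj w_m) + D_n D_m K(w_n + w_m)),
   whose diagonal is exactly pi T (1 + e^(-2 Im w_n T)) / (pi^2 + 4 T^2 (Im w_n)^2) |D_n|^2.
   Beyond n0 consecutive real parts differ by at least some g < gamma and Re w_n >= R0, and 2b <= g keeps
   every w_n - conj w_m (n ~= m) and w_n + w_m away from the poles +-b of K. Bounding the off-diagonal K
   pointwise and applying Schur's test to the kernels 1/((Re w_n -+ Re w_m)^2 - b^2) bounds the
   off-diagonal part by b (4/g^2 + 2/(g R0)) sum_n (1 + e^(-2 Im w_n T)) |D_n|^2. The c-part is small because
   |c_n| <= M/|w_n| <= epsilon/8 there, and g = gamma (1 - epsilon/16) with R0 large turns the constants into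
   those of the statement. The limit N -> infinity exists since the quadratic form converges absolutely. *)

section \<open>Fourier transform of the sine window\<close>

definition kernel_transform :: "real \<Rightarrow> complex \<Rightarrow> complex" where
  "kernel_transform T z = integral {0..T} (\<lambda>t. of_real (sin (pi * t / T)) * exp (\<i> * z * of_real t))"

lemma kernel_transform_has_integral:
  assumes "T > 0"
  shows "((\<lambda>t. of_real (sin (pi * t / T)) * exp (\<i> * z * of_real t))
           has_integral kernel_transform T z) {0..T}"
  unfolding kernel_transform_def using assms
  by (intro integrable_integral integrable_continuous_interval continuous_intros) auto

lemma has_field_derivative_exp_sin_primitive:
  fixes z b :: complex
  assumes "z\<^sup>2 \<noteq> b\<^sup>2"
  shows "((\<lambda>u. exp (\<i> * z * u) * (- \<i> * z / (z\<^sup>2 - b\<^sup>2) * sin (b * u) + b / (z\<^sup>2 - b\<^sup>2) * cos (b * u)))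
           has_field_derivative exp (\<i> * z * u) * sin (b * u)) (at u)"
proof -
  define d where "d = z\<^sup>2 - b\<^sup>2"
  define p where "p = - \<i> * z / d"
  define q where "q = b / d"
  have "\<i> * z * p - q * b = (z\<^sup>2 - b\<^sup>2) / d"
    by (simp add: p_def q_def diff_divide_distrib power2_eq_square algebra_simps)
  then have p_q: "\<i> * z * p - q * b = 1" "\<i> * z * q + p * b = 0"
    using assms by (simp_all add: d_def p_def q_def)
  have "((\<lambda>u. exp (\<i> * z * u) * (p * sin (b * u) + q * cos (b * u))) has_field_derivative
          exp (\<i> * z * u) * ((\<i> * z * p - q * b) * sin (b * u) + (\<i> * z * q + p * b) * cos (b * u))) (at u)"
    by (auto intro!: derivative_eq_intros simp: algebra_simps)
  then have "((\<lambda>u. exp (\<i> * z * u) * (p * sin (b * u) + q * cos (b * u))) has_field_derivative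
               exp (\<i> * z * u) * sin (b * u)) (at u)"
    unfolding p_q by simp
  then show ?thesis unfolding p_def q_def d_def .
qed

lemma kernel_transform_eq:
  assumes T: "T > 0" and z: "z\<^sup>2 \<noteq> (of_real (pi / T))\<^sup>2"
  shows "kernel_transform T z
           = of_real (pi / T) * (1 + exp (\<i> * z * of_real T)) / ((of_real (pi / T))\<^sup>2 - z\<^sup>2)"
proof -
  define b :: complex where "b = of_real (pi / T)"
  define G where "G u = exp (\<i> * z * u) * (- \<i> * z / (z\<^sup>2 - b\<^sup>2) * sin (b * u) + b / (z\<^sup>2 - b\<^sup>2) * cos (b * u))"
    for u
  have "((\<lambda>t. exp (\<i> * z * of_real t) * sin (b * of_real t))
               has_integral (G (of_real T) - G (of_real 0))) {0..T}"
    using T z unfolding G_def b_def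
    by (intro fundamental_theorem_of_calculus has_vector_derivative_real_field
          has_field_derivative_exp_sin_primitive) auto
  moreover have "exp (\<i> * z * of_real t) * sin (b * of_real t)
                   = of_real (sin (pi * t / T)) * exp (\<i> * z * of_real t)" for t
  proof -
    have "b * of_real t = of_real (pi * t / T)" by (simp add: b_def)
    then have "sin (b * of_real t) = of_real (sin (pi * t / T))" by (simp only: sin_of_real)
    then show ?thesis by (simp add: mult.commute)
  qed
  moreover have "G (of_real T) - G (of_real 0) = b * (1 + exp (\<i> * z * of_real T)) / (b\<^sup>2 - z\<^sup>2)"
  proof -
    have "b * of_real T = of_real pi" using T by (simp add: b_def)
    then have "sin (b * of_real T) = 0" "cos (b * of_real T) = -1"
      by (simp_all add: sin_of_real cos_of_real)
    then have "G (of_real T) - G (of_real 0) = - (b / (z\<^sup>2 - b\<^sup>2)) * (1 + exp (\<i> * z * of_real T))"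
      by (simp add: G_def algebra_simps add_divide_distrib)
    moreover have "z\<^sup>2 - b\<^sup>2 \<noteq> 0" "b\<^sup>2 - z\<^sup>2 \<noteq> 0" using z by (simp_all add: b_def)
    ultimately show ?thesis by (simp add: field_simps)
  qed
  ultimately have "((\<lambda>t. of_real (sin (pi * t / T)) * exp (\<i> * z * of_real t))
                      has_integral b * (1 + exp (\<i> * z * of_real T)) / (b\<^sup>2 - z\<^sup>2)) {0..T}"
    by simp
  then show ?thesis
    using kernel_transform_has_integral[OF T] has_integral_unique unfolding b_def by blast
qed

lemma Re_square_diff_le_norm:
  fixes b :: real and z :: complex
  shows "(Re z)\<^sup>2 - b\<^sup>2 \<le> cmod ((of_real b)\<^sup>2 - z\<^sup>2)"
proof -
  define x where "x = Re z"
  define y where "y = Im z"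
  have "Re ((of_real b)\<^sup>2 - z\<^sup>2) = b\<^sup>2 - x\<^sup>2 + y\<^sup>2" "Im ((of_real b)\<^sup>2 - z\<^sup>2) = - (2 * x * y)"
    by (simp_all add: power2_eq_square x_def y_def)
  then have "(cmod ((of_real b)\<^sup>2 - z\<^sup>2))\<^sup>2 = (b\<^sup>2 - x\<^sup>2 + y\<^sup>2)\<^sup>2 + (2 * x * y)\<^sup>2"
    by (simp only: cmod_power2) simp
  also have "\<dots> = (x\<^sup>2 - b\<^sup>2)\<^sup>2 + y\<^sup>2 * (2 * x\<^sup>2 + 2 * b\<^sup>2 + y\<^sup>2)"
    by (simp add: power2_eq_square algebra_simps)
  finally have "(x\<^sup>2 - b\<^sup>2)\<^sup>2 \<le> (cmod ((of_real b)\<^sup>2 - z\<^sup>2))\<^sup>2"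
    by simp
  then have "\<bar>x\<^sup>2 - b\<^sup>2\<bar> \<le> \<bar>cmod ((of_real b)\<^sup>2 - z\<^sup>2)\<bar>"
    by (simp only: abs_le_square_iff)
  then show ?thesis by (simp add: x_def)
qed

lemma norm_kernel_transform_le:
  assumes T: "T > 0" and Re_z: "(pi / T)\<^sup>2 < (Re z)\<^sup>2"
  shows "cmod (kernel_transform T z) \<le> (pi / T) * (1 + exp (- Im z * T)) / ((Re z)\<^sup>2 - (pi / T)\<^sup>2)"
proof -
  define b where "b = pi / T"
  have "b > 0" using T by (simp add: b_def)
  have denom: "(Re z)\<^sup>2 - b\<^sup>2 \<le> cmod ((of_real b)\<^sup>2 - z\<^sup>2)"
    by (rule Re_square_diff_le_norm)
  have pos: "0 < (Re z)\<^sup>2 - b\<^sup>2" using Re_z by (simp add: b_def)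
  have "z\<^sup>2 \<noteq> (of_real b)\<^sup>2"
  proof
    assume "z\<^sup>2 = (of_real b)\<^sup>2"
    then show False using denom pos by simp
  qed
  then have "cmod (kernel_transform T z)
               = b * cmod (1 + exp (\<i> * z * of_real T)) / cmod ((of_real b)\<^sup>2 - z\<^sup>2)"
    using T by (simp add: kernel_transform_eq[OF T] b_def norm_mult norm_divide)
  also have "\<dots> \<le> b * (1 + exp (- Im z * T)) / ((Re z)\<^sup>2 - b\<^sup>2)"
  proof (rule frac_le)
    have "cmod (1 + exp (\<i> * z * of_real T)) \<le> 1 + exp (- Im z * T)"
      using norm_triangle_ineq[of 1 "exp (\<i> * z * of_real T)"] by (simp add: norm_exp_eq_Re)
    then show "b * cmod (1 + exp (\<i> * z * of_real T)) \<le> b * (1 + exp (- Im z * T))"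
      using \<open>b > 0\<close> by (intro mult_left_mono) auto
  qed (use denom pos \<open>b > 0\<close> in \<open>auto intro: add_nonneg_nonneg\<close>)
  finally show ?thesis by (simp add: b_def)
qed

lemma kernel_transform_diff_cnj:
  assumes T: "T > 0"
  shows "kernel_transform T (w - cnj w)
           = of_real (pi * T * (1 + exp (- 2 * Im w * T)) / (pi\<^sup>2 + 4 * T\<^sup>2 * (Im w)\<^sup>2))"
proof -
  define a where "a = Im w"
  define b where "b = pi / T"
  have z: "w - cnj w = \<i> * of_real (2 * a)" by (simp add: complex_eq_iff a_def)
  have z2: "(w - cnj w)\<^sup>2 = of_real (- 4 * a\<^sup>2)" unfolding z by (simp add: power2_eq_square)
  have "0 < b\<^sup>2" using T by (simp add: b_def)
  then have "- 4 * a\<^sup>2 \<noteq> b\<^sup>2" by (smt (verit) zero_le_power2)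
  then have "(w - cnj w)\<^sup>2 \<noteq> (of_real b)\<^sup>2"
    unfolding z2 by (metis of_real_eq_iff of_real_power)
  moreover have "exp (\<i> * (w - cnj w) * of_real T) = of_real (exp (- 2 * a * T))"
    unfolding z by (simp flip: exp_of_real add: algebra_simps)
  ultimately have "kernel_transform T (w - cnj w) = of_real (b * (1 + exp (- 2 * a * T)) / (b\<^sup>2 + 4 * a\<^sup>2))"
    using kernel_transform_eq[OF T, of "w - cnj w"] unfolding z2 by (simp add: b_def)
  also have "b * (1 + exp (- 2 * a * T)) / (b\<^sup>2 + 4 * a\<^sup>2)
               = pi * T * (1 + exp (- 2 * a * T)) / (pi\<^sup>2 + 4 * T\<^sup>2 * a\<^sup>2)"
  proof -
    have "b\<^sup>2 + 4 * a\<^sup>2 = (pi\<^sup>2 + 4 * T\<^sup>2 * a\<^sup>2) / T\<^sup>2"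
      using T by (simp add: b_def field_simps)
    moreover have "b * u * T\<^sup>2 = pi * T * u" for u
      using T by (simp add: b_def power2_eq_square)
    ultimately show ?thesis by (metis divide_divide_eq_right)
  qed
  finally show ?thesis by (simp add: a_def)
qed

section \<open>The weighted integral as a quadratic form\<close>

definition quad_term :: "real \<Rightarrow> (nat \<Rightarrow> complex) \<Rightarrow> (nat \<Rightarrow> complex) \<Rightarrow> nat \<Rightarrow> nat \<Rightarrow> complex" where
  "quad_term T w D n m = D n * cnj (D m) * kernel_transform T (w n - cnj (w m))
                          + D n * D m * kernel_transform T (w n + w m)"

definition quad_form :: "real \<Rightarrow> (nat \<Rightarrow> complex) \<Rightarrow> (nat \<Rightarrow> complex) \<Rightarrow> nat \<Rightarrow> nat \<Rightarrow> complex" where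
  "quad_form T w D n0 N = (\<Sum>n\<in>{n0..<N}. \<Sum>m\<in>{n0..<N}. quad_term T w D n m)"

lemma norm_psum_square:
  "(cmod (psum w D n0 N t))\<^sup>2 = 2 * Re (\<Sum>n\<in>{n0..<N}. \<Sum>m\<in>{n0..<N}.
      D n * cnj (D m) * exp (\<i> * (w n - cnj (w m)) * of_real t)
      + D n * D m * exp (\<i> * (w n + w m) * of_real t))"
proof -
  define S where "S = (\<Sum>n\<in>{n0..<N}. D n * exp (\<i> * w n * of_real t))"
  have "psum w D n0 N t = S + cnj S"
    unfolding psum_def S_def by (simp add: sum.distrib exp_cnj)
  then have "(cmod (psum w D n0 N t))\<^sup>2 = 2 * Re (S * cnj S + S * S)"
    by (simp add: complex_add_cnj power2_abs power2_eq_square algebra_simps)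
  also have "S * cnj S + S * S = (\<Sum>n\<in>{n0..<N}. \<Sum>m\<in>{n0..<N}.
      D n * exp (\<i> * w n * of_real t) * (cnj (D m) * exp (- \<i> * cnj (w m) * of_real t)
                                        + D m * exp (\<i> * w m * of_real t)))"
    unfolding S_def by (simp add: sum_product exp_cnj distrib_left sum.distrib)
  also have "\<dots> = (\<Sum>n\<in>{n0..<N}. \<Sum>m\<in>{n0..<N}.
      D n * cnj (D m) * exp (\<i> * (w n - cnj (w m)) * of_real t)
      + D n * D m * exp (\<i> * (w n + w m) * of_real t))"
    by (intro sum.cong refl) (simp add: algebra_simps flip: exp_add)
  finally show ?thesis .
qed

lemma has_integral_kfun_norm_psum_square:
  assumes T: "T > 0"
  shows "((\<lambda>t. kfun T t * (cmod (psum w D n0 N t))\<^sup>2) has_integral 2 * Re (quad_form T w D n0 N)) {0..}"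
proof -
  let ?k = "\<lambda>t. of_real (sin (pi * t / T)) :: complex"
  have "((\<lambda>t. \<Sum>n\<in>{n0..<N}. \<Sum>m\<in>{n0..<N}.
            D n * cnj (D m) * (?k t * exp (\<i> * (w n - cnj (w m)) * of_real t))
            + D n * D m * (?k t * exp (\<i> * (w n + w m) * of_real t)))
          has_integral quad_form T w D n0 N) {0..T}"
    unfolding quad_form_def quad_term_def
    by (intro has_integral_sum has_integral_add has_integral_mult_right
          kernel_transform_has_integral T finite_atLeastLessThan)
  from has_integral_mult_right[OF has_integral_Re[OF this], of 2]
  have "((\<lambda>t. kfun T t * (cmod (psum w D n0 N t))\<^sup>2) has_integral 2 * Re (quad_form T w D n0 N)) {0..T}"
  proof (rule has_integral_cong[THEN iffD1, rotated])
    fix t :: real assume "t \<in> {0..T}"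
    have "(\<Sum>n\<in>{n0..<N}. \<Sum>m\<in>{n0..<N}.
            D n * cnj (D m) * (?k t * exp (\<i> * (w n - cnj (w m)) * of_real t))
            + D n * D m * (?k t * exp (\<i> * (w n + w m) * of_real t)))
          = ?k t * (\<Sum>n\<in>{n0..<N}. \<Sum>m\<in>{n0..<N}.
            D n * cnj (D m) * exp (\<i> * (w n - cnj (w m)) * of_real t)
            + D n * D m * exp (\<i> * (w n + w m) * of_real t))"
      by (simp add: sum_distrib_left algebra_simps)
    with \<open>t \<in> {0..T}\<close> show "2 * Re (\<Sum>n\<in>{n0..<N}. \<Sum>m\<in>{n0..<N}.
            D n * cnj (D m) * (?k t * exp (\<i> * (w n - cnj (w m)) * of_real t))
            + D n * D m * (?k t * exp (\<i> * (w n + w m) * of_real t)))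
          = kfun T t * (cmod (psum w D n0 N t))\<^sup>2"
      by (simp only: kfun_def norm_psum_square) simp
  qed
  then show ?thesis
    by (rule has_integral_on_superset) (auto simp: kfun_def)
qed

lemma integral_kfun_psum_difference:
  assumes "T > 0"
  shows "integral {0..} (\<lambda>t. kfun T t * ((cmod (psum w C n0 N t))\<^sup>2 - 2 * (cmod (psum w D n0 N t))\<^sup>2))
           = 2 * Re (quad_form T w C n0 N) - 4 * Re (quad_form T w D n0 N)"
  using has_integral_diff[OF has_integral_kfun_norm_psum_square[OF assms, of w C n0 N]
          has_integral_mult_right[OF has_integral_kfun_norm_psum_square[OF assms, of w D n0 N], of 2]]
  by (simp add: integral_unique algebra_simps)

lemma sum_inverse_square_minus_quarter_le: "(\<Sum>i<K. 1 / ((real i + 1)\<^sup>2 - 1/4)) \<le> 2"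
proof -
  have "(\<Sum>i<K. 1 / ((real i + 1)\<^sup>2 - 1/4)) = 2 - 2 / (2 * real K + 1)"
  proof (induction K)
    case (Suc K)
    have "1 / ((real K + 1)\<^sup>2 - 1/4) = 2 / (2 * real K + 1) - 2 / (2 * real K + 3)"
      by (simp add: field_simps power2_eq_square)
    with Suc show ?case by simp
  qed simp
  then show ?thesis by simp
qed

lemma sum_inverse_square_arith_prog_le:
  fixes A g :: real
  assumes "g > 0" "g \<le> A"
  shows "(\<Sum>k<K. 1 / (A + real k * g)\<^sup>2) \<le> 2 / (g * A)"
proof -
  have telescope: "(\<Sum>k<K. 1 / ((A + real k * g) * (A + (real k + 1) * g)))
                     = (1 / g) * (1 / A - 1 / (A + real K * g))" for K
  proof (induction K)
    case (Suc K)
    have "A + real K * g > 0" "A + (real K + 1) * g > 0"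
      using assms by (auto intro: add_pos_nonneg)
    then have "1 / ((A + real K * g) * (A + (real K + 1) * g))
                 = (1 / g) * (1 / (A + real K * g) - 1 / (A + (real K + 1) * g))"
      using assms by (simp add: field_simps)
    with Suc show ?case by (simp add: algebra_simps)
  qed simp
  have "(\<Sum>k<K. 1 / (A + real k * g)\<^sup>2) \<le> (\<Sum>k<K. 2 * (1 / ((A + real k * g) * (A + (real k + 1) * g))))"
  proof (rule sum_mono)
    fix k
    have pos: "A + real k * g > 0" using assms by (auto intro: add_pos_nonneg)
    have "g \<le> A + g * real k" using assms by (simp add: add_increasing2)
    then have "A + (real k + 1) * g \<le> 2 * (A + real k * g)"
      using assms by (simp add: algebra_simps)
    then have "(A + real k * g) * (A + (real k + 1) * g) \<le> 2 * (A + real k * g)\<^sup>2"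
      using pos by (simp add: power2_eq_square mult_left_mono)
    moreover have "0 < (A + real k * g) * (A + (real k + 1) * g)"
      using pos assms by (simp add: add_pos_nonneg)
    ultimately have "2 / (2 * (A + real k * g)\<^sup>2) \<le> 2 / ((A + real k * g) * (A + (real k + 1) * g))"
      using pos by (intro divide_left_mono) auto
    then show "1 / (A + real k * g)\<^sup>2 \<le> 2 * (1 / ((A + real k * g) * (A + (real k + 1) * g)))"
      by simp
  qed
  also have "\<dots> = 2 * ((1 / g) * (1 / A - 1 / (A + real K * g)))"
    by (simp only: telescope flip: sum_distrib_left)
  also have "\<dots> \<le> 2 / (g * A)"
    using assms by (simp add: field_simps add_pos_nonneg)
  finally show ?thesis .
qed

lemma schur_test_symmetric:
  fixes h :: "nat \<Rightarrow> nat \<Rightarrow> real" and y :: "nat \<Rightarrow> real"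
  assumes "finite I" and sym: "\<And>n m. h n m = h m n"
    and row: "\<And>n. n \<in> I \<Longrightarrow> (\<Sum>m\<in>I. h n m) \<le> \<beta>" and y: "\<And>n. y n \<ge> 0"
  shows "(\<Sum>n\<in>I. \<Sum>m\<in>I. h n m * (y n + y m) / 2) \<le> \<beta> * (\<Sum>n\<in>I. y n)"
proof -
  have "(\<Sum>n\<in>I. \<Sum>m\<in>I. h n m * y m) = (\<Sum>n\<in>I. \<Sum>m\<in>I. h n m * y n)"
    by (subst sum.swap) (simp add: sym)
  then have "(\<Sum>n\<in>I. \<Sum>m\<in>I. h n m * (y n + y m) / 2) = (\<Sum>n\<in>I. y n * (\<Sum>m\<in>I. h n m))"
    by (simp add: sum.distrib add_divide_distrib distrib_left sum_divide_distrib[symmetric]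
                  sum_distrib_left mult.commute)
  also have "\<dots> \<le> (\<Sum>n\<in>I. y n * \<beta>)"
    by (intro sum_mono mult_left_mono row y)
  finally show ?thesis by (simp add: sum_distrib_left mult.commute)
qed

lemma mult_one_plus_mult_le:
  fixes x y p q :: real
  shows "x * y * (1 + p * q) \<le> ((1 + p\<^sup>2) * x\<^sup>2 + (1 + q\<^sup>2) * y\<^sup>2) / 2"
proof -
  have "0 \<le> (x - y)\<^sup>2 + (p * x - q * y)\<^sup>2" by simp
  then show ?thesis by (simp add: power2_eq_square algebra_simps)
qed

lemma Cauchy_dominated:
  fixes S :: "nat \<Rightarrow> 'a::metric_space" and P :: "nat \<Rightarrow> 'b::metric_space"
  assumes "Cauchy P" and le: "\<And>m n. m \<le> n \<Longrightarrow> dist (S m) (S n) \<le> dist (P m) (P n)"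
  shows "Cauchy S"
proof (rule metric_CauchyI)
  fix e :: real assume "e > 0"
  with \<open>Cauchy P\<close> obtain K where K: "\<And>m n. m \<ge> K \<Longrightarrow> n \<ge> K \<Longrightarrow> dist (P m) (P n) < e"
    unfolding Cauchy_def by blast
  have "dist (S m) (S n) < e" if "m \<ge> K" "n \<ge> K" for m n
  proof (cases "m \<le> n")
    case True
    then show ?thesis using le K[OF that] by fastforce
  next
    case False
    then show ?thesis using le[of n m] K[OF that] by (simp add: dist_commute)
  qed
  then show "\<exists>K. \<forall>m\<ge>K. \<forall>n\<ge>K. dist (S m) (S n) < e" by blast
qed

lemma convergent_sum_incseq:
  fixes f :: "'a \<Rightarrow> 'b::banach" and A :: "nat \<Rightarrow> 'a set"
  assumes "incseq A" and fin: "\<And>N. finite (A N)" and bound: "\<And>N. (\<Sum>x\<in>A N. norm (f x)) \<le> B"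
  shows "convergent (\<lambda>N. \<Sum>x\<in>A N. f x)"
proof -
  define S where "S N = (\<Sum>x\<in>A N. f x)" for N
  define P where "P N = (\<Sum>x\<in>A N. norm (f x))" for N
  have sub: "A m \<subseteq> A n" if "m \<le> n" for m n
    using \<open>incseq A\<close> that by (simp add: incseq_def)
  have step: "dist (S m) (S n) \<le> dist (P m) (P n)" if "m \<le> n" for m n
  proof -
    have "dist (S m) (S n) = norm (\<Sum>x\<in>A n - A m. f x)"
      using fin sub[OF that] by (simp add: S_def dist_norm norm_minus_commute sum_diff)
    also have "\<dots> \<le> (\<Sum>x\<in>A n - A m. norm (f x))" by (rule norm_sum)
    also have "\<dots> = P n - P m" using fin sub[OF that] by (simp add: P_def sum_diff)
    finally show ?thesis by (simp add: dist_real_def)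
  qed
  have "convergent P"
  proof (rule Bseq_monoseq_convergent)
    show "Bseq P"
      using bound by (intro BseqI'[of _ B]) (simp add: P_def sum_nonneg)
    have "P m \<le> P n" if "m \<le> n" for m n
      unfolding P_def using fin sub[OF that] by (intro sum_mono2) auto
    then show "monoseq P" unfolding monoseq_def by blast
  qed
  then have "Cauchy P" by (rule convergent_Cauchy)
  then have "Cauchy S" using step by (rule Cauchy_dominated)
  then show ?thesis by (simp add: Cauchy_convergent_iff S_def[abs_def])
qed

lemma Re_ge_of_gaps:
  fixes w :: "nat \<Rightarrow> complex" and g :: real and n0 n m :: nat
  assumes gap: "\<And>n. n \<ge> n0 \<Longrightarrow> Re (w n) + g \<le> Re (w (Suc n))" and "n0 \<le> n" "n \<le> m"
  shows "Re (w n) + real (m - n) * g \<le> Re (w m)"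
  using \<open>n \<le> m\<close>
proof (induction m rule: dec_induct)
  case (step m)
  then show ?case using gap[of m] \<open>n0 \<le> n\<close> by (simp add: Suc_diff_le algebra_simps)
qed simp

lemma suminf_shift_le_limit:
  fixes f :: "nat \<Rightarrow> real"
  assumes "X \<longlonglongrightarrow> L" and le: "\<And>N. a * (\<Sum>n\<in>{n0..<N}. f n) \<le> X N"
    and "summable (\<lambda>m. f (m + n0))"
  shows "a * (\<Sum>m. f (m + n0)) \<le> L"
proof (rule tendsto_le[OF trivial_limit_sequentially \<open>X \<longlonglongrightarrow> L\<close>])
  have "(\<Sum>n\<in>{n0..<N + n0}. f n) = (\<Sum>m<N. f (m + n0))" for N
    using sum.shift_bounds_nat_ivl[of f 0 n0 N] by (simp add: atLeast0LessThan)
  then have "(\<lambda>N. \<Sum>n\<in>{n0..<N + n0}. f n) \<longlonglongrightarrow> (\<Sum>m. f (m + n0))"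
    using summable_LIMSEQ[OF assms(3)] by simp
  then have "(\<lambda>N. \<Sum>n\<in>{n0..<N}. f n) \<longlonglongrightarrow> (\<Sum>m. f (m + n0))"
    by (rule LIMSEQ_offset)
  then show "(\<lambda>N. a * (\<Sum>n\<in>{n0..<N}. f n)) \<longlonglongrightarrow> a * (\<Sum>m. f (m + n0))"
    by (rule tendsto_mult_left)
  show "\<forall>\<^sub>F N in sequentially. a * (\<Sum>n\<in>{n0..<N}. f n) \<le> X N"
    by (intro always_eventually allI le)
qed

section \<open>Frequencies with a uniform gap\<close>

locale separated_sequence =
  fixes w :: "nat \<Rightarrow> complex" and g R0 :: real and n0 :: nat
  assumes gap: "\<And>n. n \<ge> n0 \<Longrightarrow> Re (w n) + g \<le> Re (w (Suc n))"
    and g_pos: "0 < g" and g_le_R0: "g \<le> R0" and R0_le: "R0 \<le> Re (w n0)"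
begin

lemma Re_ge_gaps:
  assumes "n0 \<le> n" "n \<le> m"
  shows "Re (w n) + real (m - n) * g \<le> Re (w m)"
  using gap assms by (rule Re_ge_of_gaps)

lemma Re_ge_R0_gaps: "n0 \<le> n \<Longrightarrow> R0 + real (n - n0) * g \<le> Re (w n)"
  using Re_ge_gaps[of n0 n] R0_le by simp

lemma R0_le_Re: "n0 \<le> n \<Longrightarrow> R0 \<le> Re (w n)"
  using Re_ge_R0_gaps[of n] g_pos zero_le_mult_iff[of "real (n - n0)" g] by linarith

lemma norm_le_div_R0:
  assumes "cmod c \<le> M / cmod (w n)" "0 \<le> M" "n0 \<le> n"
  shows "cmod c \<le> M / R0"
proof -
  have "0 < R0" using g_pos g_le_R0 by simp
  moreover have "R0 \<le> cmod (w n)"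
    using R0_le_Re[OF assms(3)] complex_Re_le_cmod order_trans by blast
  ultimately have "M / cmod (w n) \<le> M / R0"
    using assms(2) by (intro divide_left_mono mult_pos_pos) auto
  with assms(1) show ?thesis by linarith
qed

end

locale separated_frequencies = separated_sequence +
  fixes T :: real
  assumes T_pos: "T > 0" and two_b_le_g: "2 * (pi / T) \<le> g"
begin

definition "b = pi / T"
definition "weight n = 1 + exp (- 2 * Im (w n) * T)"
definition "weighted_sq D n = weight n * (cmod (D n))\<^sup>2"
definition "diag_coeff n = pi * T * weight n / (pi\<^sup>2 + 4 * T\<^sup>2 * (Im (w n))\<^sup>2)"
definition "diff_kernel n m = (if n = m then 0 else 1 / ((Re (w n) - Re (w m))\<^sup>2 - b\<^sup>2))"
definition "sum_kernel n m = 1 / ((Re (w n) + Re (w m))\<^sup>2 - b\<^sup>2)"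
definition "gap_kernel_bound i = 1 / (g\<^sup>2 * ((real i + 1)\<^sup>2 - 1/4))"
definition "row_bound = 4 / g\<^sup>2 + 2 / (g * R0)"
definition "diff_term D n m = (if n = m then 0 else D n * cnj (D m) * kernel_transform T (w n - cnj (w m)))"
definition "sum_term D n m = D n * D m * kernel_transform T (w n + w m)"

lemma b_pos: "b > 0"
  using T_pos by (simp add: b_def)

lemma b_le_half_g: "b \<le> g / 2"
  using two_b_le_g unfolding b_def by linarith

lemma weight_pos: "weight n > 0"
  by (simp add: weight_def add_pos_nonneg)

lemma weighted_sq_nonneg: "weighted_sq D n \<ge> 0"
  using weight_pos[of n] by (simp add: weighted_sq_def)

lemma diag_coeff_nonneg: "diag_coeff n \<ge> 0"
  using T_pos weight_pos[of n] by (simp add: diag_coeff_def add_pos_nonneg)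

lemma diag_coeff_le: "diag_coeff n \<le> T / pi * weight n"
proof -
  have "diag_coeff n \<le> pi * T * weight n / pi\<^sup>2"
    unfolding diag_coeff_def using T_pos weight_pos[of n]
    by (intro divide_left_mono) (auto intro!: mult_pos_pos add_pos_nonneg)
  also have "\<dots> = T / pi * weight n" by (simp add: power2_eq_square)
  finally show ?thesis .
qed

lemma row_bound_nonneg: "row_bound \<ge> 0"
  using g_pos g_le_R0 by (simp add: row_bound_def)

lemma diff_kernel_sym: "diff_kernel n m = diff_kernel m n"
  by (simp add: diff_kernel_def power2_commute)

lemma sum_kernel_sym: "sum_kernel n m = sum_kernel m n"
  by (simp add: sum_kernel_def add.commute)

lemma gap_kernel_bound_nonneg: "gap_kernel_bound i \<ge> 0"
proof -
  have "1 \<le> (real i + 1)\<^sup>2" by (simp add: one_le_power)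
  then have "0 \<le> (real i + 1)\<^sup>2 - 1/4" by linarith
  then have "0 \<le> g\<^sup>2 * ((real i + 1)\<^sup>2 - 1/4)" by simp
  then show ?thesis by (simp add: gap_kernel_bound_def)
qed

lemma sum_gap_kernel_bound_le: "(\<Sum>i<K. gap_kernel_bound i) \<le> 2 / g\<^sup>2"
proof -
  have "(\<Sum>i<K. gap_kernel_bound i) = (1 / g\<^sup>2) * (\<Sum>i<K. 1 / ((real i + 1)\<^sup>2 - 1/4))"
    by (simp add: gap_kernel_bound_def sum_distrib_left)
  also have "\<dots> \<le> (1 / g\<^sup>2) * 2"
    using sum_inverse_square_minus_quarter_le by (intro mult_left_mono) auto
  finally show ?thesis by simp
qed

lemma diff_kernel_le:
  assumes "n0 \<le> n" "n < m"
  shows "diff_kernel n m \<le> gap_kernel_bound (m - Suc n)"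
proof -
  define k where "k = real (m - Suc n) + 1"
  have "k \<ge> 1" by (simp add: k_def)
  have "(k * g)\<^sup>2 \<le> (Re (w m) - Re (w n))\<^sup>2"
    using Re_ge_gaps[of n m] assms g_pos \<open>k \<ge> 1\<close> by (intro power_mono) (auto simp: k_def)
  moreover have "b\<^sup>2 \<le> (g / 2)\<^sup>2" using b_le_half_g b_pos by (intro power_mono) auto
  ultimately have "g\<^sup>2 * (k\<^sup>2 - 1/4) \<le> (Re (w m) - Re (w n))\<^sup>2 - b\<^sup>2"
    by (simp add: algebra_simps power_mult_distrib power_divide)
  moreover have "0 < g\<^sup>2 * (k\<^sup>2 - 1/4)"
  proof -
    have "k\<^sup>2 \<ge> 1" using \<open>k \<ge> 1\<close> by (simp add: one_le_power)
    then show ?thesis using g_pos by simp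
  qed
  ultimately show ?thesis
    using assms unfolding diff_kernel_def gap_kernel_bound_def k_def
    by (simp add: divide_left_mono power2_commute)
qed

lemma row_sum_diff_kernel_le:
  assumes n: "n \<in> {n0..<N}"
  shows "(\<Sum>m\<in>{n0..<N}. diff_kernel n m) \<le> 4 / g\<^sup>2"
proof -
  have "(\<Sum>m\<in>{n0..<N}. diff_kernel n m)
          = (\<Sum>m\<in>{n0..<n}. diff_kernel n m) + (\<Sum>m\<in>{Suc n..<N}. diff_kernel n m)"
  proof -
    have "(\<Sum>m\<in>{n0..<N}. diff_kernel n m)
            = (\<Sum>m\<in>{n0..<n}. diff_kernel n m) + (\<Sum>m\<in>{n..<N}. diff_kernel n m)"
      using n by (simp add: sum.atLeastLessThan_concat)
    also have "(\<Sum>m\<in>{n..<N}. diff_kernel n m) = (\<Sum>m\<in>{Suc n..<N}. diff_kernel n m)"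
      using n by (simp add: sum.atLeast_Suc_lessThan diff_kernel_def)
    finally show ?thesis .
  qed
  also have "(\<Sum>m\<in>{n0..<n}. diff_kernel n m) \<le> (\<Sum>i<n. gap_kernel_bound i)"
  proof -
    have "(\<Sum>m\<in>{n0..<n}. diff_kernel n m) \<le> (\<Sum>m\<in>{n0..<n}. gap_kernel_bound (n - Suc m))"
      using diff_kernel_le diff_kernel_sym by (intro sum_mono) auto
    also have "\<dots> \<le> (\<Sum>m<n. gap_kernel_bound (n - Suc m))"
      by (intro sum_mono2) (auto simp: gap_kernel_bound_nonneg)
    also have "\<dots> = (\<Sum>i<n. gap_kernel_bound i)"
      by (rule sum.nat_diff_reindex)
    finally show ?thesis .
  qed
  also have "(\<Sum>m\<in>{Suc n..<N}. diff_kernel n m) \<le> (\<Sum>i<N - Suc n. gap_kernel_bound i)"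
  proof -
    have "(\<Sum>m\<in>{Suc n..<N}. diff_kernel n m) \<le> (\<Sum>m\<in>{Suc n..<N}. gap_kernel_bound (m - Suc n))"
      using diff_kernel_le n by (intro sum_mono) auto
    also have "\<dots> = (\<Sum>m\<in>{0 + Suc n..<(N - Suc n) + Suc n}. gap_kernel_bound (m - Suc n))"
      using n by simp
    also have "\<dots> = (\<Sum>i<N - Suc n. gap_kernel_bound i)"
      by (subst sum.shift_bounds_nat_ivl) (simp add: atLeast0LessThan)
    finally show ?thesis .
  qed
  finally show ?thesis
    using sum_gap_kernel_bound_le[of n] sum_gap_kernel_bound_le[of "N - Suc n"] by simp
qed

lemma sum_kernel_le:
  assumes "n0 \<le> n" "n0 \<le> m"
  shows "sum_kernel n m \<le> 2 / (2 * R0 + real (m - n0) * g)\<^sup>2"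
proof -
  define S where "S = Re (w n) + Re (w m)"
  define A where "A = 2 * R0 + real (m - n0) * g"
  have "2 * g \<le> A" "A \<le> S"
    using Re_ge_R0_gaps[OF assms(1)] Re_ge_R0_gaps[OF assms(2)] g_le_R0 g_pos
    unfolding A_def S_def by (smt (verit) mult_nonneg_nonneg of_nat_0_le_iff)+
  then have "4 * b\<^sup>2 \<le> S\<^sup>2"
    using b_le_half_g b_pos power_mono[of "2 * b" S 2] by (simp add: power_mult_distrib)
  then have "2 * b\<^sup>2 \<le> S\<^sup>2"
    using zero_le_power2[of b] by linarith
  then have le: "S\<^sup>2 / 2 \<le> S\<^sup>2 - b\<^sup>2" by simp
  have "0 < S\<^sup>2 / 2"
    using \<open>2 * g \<le> A\<close> \<open>A \<le> S\<close> g_pos by simp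
  with le have "0 < (S\<^sup>2 - b\<^sup>2) * (S\<^sup>2 / 2)" by (intro mult_pos_pos) linarith+
  then have "1 / (S\<^sup>2 - b\<^sup>2) \<le> 1 / (S\<^sup>2 / 2)"
    by (rule divide_left_mono[OF le zero_le_one])
  also have "\<dots> \<le> 2 / A\<^sup>2"
  proof -
    have "0 < A" using \<open>2 * g \<le> A\<close> g_pos by simp
    then have "A\<^sup>2 \<le> S\<^sup>2" using \<open>A \<le> S\<close> by (intro power_mono) auto
    moreover have "0 < S\<^sup>2 * A\<^sup>2" using \<open>0 < A\<close> \<open>A \<le> S\<close> by simp
    ultimately show ?thesis by (simp add: divide_left_mono)
  qed
  finally show ?thesis by (simp add: sum_kernel_def S_def A_def)
qed

lemma row_sum_sum_kernel_le:
  assumes n: "n \<in> {n0..<N}"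
  shows "(\<Sum>m\<in>{n0..<N}. sum_kernel n m) \<le> 2 / (g * R0)"
proof -
  have "(\<Sum>m\<in>{n0..<N}. sum_kernel n m) \<le> (\<Sum>m\<in>{n0..<N}. 2 / (2 * R0 + real (m - n0) * g)\<^sup>2)"
    using sum_kernel_le n by (intro sum_mono) auto
  also have "\<dots> = 2 * (\<Sum>i<N - n0. 1 / (2 * R0 + real i * g)\<^sup>2)"
    using sum.shift_bounds_nat_ivl[of "\<lambda>m. 2 / (2 * R0 + real (m - n0) * g)\<^sup>2" 0 n0 "N - n0"] n
    by (simp add: atLeast0LessThan sum_distrib_left)
  also have "\<dots> \<le> 2 * (2 / (g * (2 * R0)))"
    using g_le_R0 g_pos by (intro mult_left_mono sum_inverse_square_arith_prog_le) auto
  finally show ?thesis using g_pos g_le_R0 by simp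
qed

text \<open>With \<open>p = exp (- Im (w n) * T)\<close> and \<open>q = exp (- Im (w m) * T)\<close>, AM-GM splits the factor
  \<open>1 + p q\<close> of the bound on \<open>|K|\<close> into the weights \<open>1 + p\<^sup>2\<close> and \<open>1 + q\<^sup>2\<close> of the two indices,
  the symmetric form that Schur's test needs.\<close>

lemma norm_mult_kernel_transform_le:
  assumes Im_z: "Im z = Im (w n) + Im (w m)" and Re_z: "b\<^sup>2 < (Re z)\<^sup>2"
    and X: "cmod X = cmod (D n) * cmod (D m)"
  shows "cmod (X * kernel_transform T z)
           \<le> b * (1 / ((Re z)\<^sup>2 - b\<^sup>2)) * ((weighted_sq D n + weighted_sq D m) / 2)"
proof -
  define p where "p = exp (- Im (w n) * T)"
  define q where "q = exp (- Im (w m) * T)"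
  have "exp (- Im z * T) = p * q"
    unfolding p_def q_def Im_z by (simp add: algebra_simps flip: exp_add)
  then have K: "cmod (kernel_transform T z) \<le> b * (1 + p * q) / ((Re z)\<^sup>2 - b\<^sup>2)"
    using norm_kernel_transform_le[OF T_pos, of z] Re_z by (simp add: b_def)
  have weights: "1 + p\<^sup>2 = weight n" "1 + q\<^sup>2 = weight m"
    unfolding p_def q_def weight_def by (simp_all add: power2_eq_square flip: exp_add)
  have "cmod (X * kernel_transform T z) \<le> cmod (D n) * cmod (D m) * (b * (1 + p * q) / ((Re z)\<^sup>2 - b\<^sup>2))"
    unfolding norm_mult X by (intro mult_left_mono K) auto
  also have "\<dots> = b * (1 / ((Re z)\<^sup>2 - b\<^sup>2)) * (cmod (D n) * cmod (D m) * (1 + p * q))"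
    by (simp add: field_simps)
  also have "\<dots> \<le> b * (1 / ((Re z)\<^sup>2 - b\<^sup>2)) * ((weighted_sq D n + weighted_sq D m) / 2)"
    using mult_one_plus_mult_le[of "cmod (D n)" "cmod (D m)" p q] Re_z b_pos
    unfolding weighted_sq_def weights by (intro mult_left_mono) auto
  finally show ?thesis .
qed

lemma norm_diff_term_le:
  assumes "n0 \<le> n" "n0 \<le> m"
  shows "cmod (diff_term D n m) \<le> b * diff_kernel n m * ((weighted_sq D n + weighted_sq D m) / 2)"
proof (cases "n = m")
  case False
  define z where "z = w n - cnj (w m)"
  have gap_ge: "g \<le> Re (w j) - Re (w i)" if "n0 \<le> i" "i < j" for i j
  proof -
    have "1 * g \<le> real (j - i) * g" using that g_pos by (intro mult_right_mono) auto
    then show ?thesis using Re_ge_gaps[of i j] that by simp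
  qed
  have "g \<le> \<bar>Re (w n) - Re (w m)\<bar>"
  proof (cases "n < m")
    case True
    then show ?thesis using gap_ge[of n m] assms by linarith
  next
    case False
    then have "m < n" using \<open>n \<noteq> m\<close> by simp
    then show ?thesis using gap_ge[of m n] assms by linarith
  qed
  then have "b < \<bar>Re z\<bar>" using b_le_half_g g_pos by (simp add: z_def)
  then have "b\<^sup>2 < (Re z)\<^sup>2" using b_pos power_strict_mono[of b "\<bar>Re z\<bar>" 2] by simp
  then show ?thesis
    using norm_mult_kernel_transform_le[of z n m "D n * cnj (D m)" D] False
    by (simp add: z_def diff_term_def diff_kernel_def norm_mult)
qed (simp add: diff_term_def diff_kernel_def)

lemma norm_sum_term_le:
  assumes "n0 \<le> n" "n0 \<le> m"
  shows "cmod (sum_term D n m) \<le> b * sum_kernel n m * ((weighted_sq D n + weighted_sq D m) / 2)"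
proof -
  define z where "z = w n + w m"
  have "2 * g \<le> Re z"
    using R0_le_Re[OF assms(1)] R0_le_Re[OF assms(2)] g_le_R0 by (simp add: z_def)
  then have "b\<^sup>2 < (Re z)\<^sup>2"
    using b_le_half_g b_pos g_pos by (intro power_strict_mono) auto
  then show ?thesis
    using norm_mult_kernel_transform_le[of z n m "D n * D m" D]
    by (simp add: z_def sum_term_def sum_kernel_def norm_mult)
qed

lemma off_diagonal_norm_le:
  "(\<Sum>n\<in>{n0..<N}. \<Sum>m\<in>{n0..<N}. cmod (diff_term D n m) + cmod (sum_term D n m))
     \<le> b * row_bound * (\<Sum>n\<in>{n0..<N}. weighted_sq D n)"
proof -
  have "(\<Sum>n\<in>{n0..<N}. \<Sum>m\<in>{n0..<N}. cmod (diff_term D n m) + cmod (sum_term D n m))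
     \<le> (\<Sum>n\<in>{n0..<N}. \<Sum>m\<in>{n0..<N}.
          b * ((diff_kernel n m + sum_kernel n m) * (weighted_sq D n + weighted_sq D m) / 2))"
  proof (intro sum_mono)
    fix n m assume "n \<in> {n0..<N}" "m \<in> {n0..<N}"
    then have "cmod (diff_term D n m) \<le> b * diff_kernel n m * ((weighted_sq D n + weighted_sq D m) / 2)"
      "cmod (sum_term D n m) \<le> b * sum_kernel n m * ((weighted_sq D n + weighted_sq D m) / 2)"
      using norm_diff_term_le norm_sum_term_le by auto
    then show "cmod (diff_term D n m) + cmod (sum_term D n m)
                 \<le> b * ((diff_kernel n m + sum_kernel n m) * (weighted_sq D n + weighted_sq D m) / 2)"
      by (simp add: algebra_simps)
  qed
  also have "\<dots> = b * (\<Sum>n\<in>{n0..<N}. \<Sum>m\<in>{n0..<N}.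
          (diff_kernel n m + sum_kernel n m) * (weighted_sq D n + weighted_sq D m) / 2)"
    by (simp add: sum_distrib_left)
  also have "\<dots> \<le> b * (row_bound * (\<Sum>n\<in>{n0..<N}. weighted_sq D n))"
  proof (intro mult_left_mono schur_test_symmetric)
    show "(\<Sum>m\<in>{n0..<N}. diff_kernel n m + sum_kernel n m) \<le> row_bound" if "n \<in> {n0..<N}" for n
      using row_sum_diff_kernel_le[OF that] row_sum_sum_kernel_le[OF that]
      by (simp add: row_bound_def sum.distrib)
  qed (use b_pos weighted_sq_nonneg diff_kernel_sym sum_kernel_sym in auto)
  finally show ?thesis by simp
qed

lemma quad_term_decomp:
  "quad_term T w D n m = (if n = m then of_real (diag_coeff n * (cmod (D n))\<^sup>2) else 0)
                          + diff_term D n m + sum_term D n m"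
proof (cases "n = m")
  case True
  have "D n * cnj (D n) * kernel_transform T (w n - cnj (w n)) = of_real ((cmod (D n))\<^sup>2 * diag_coeff n)"
    by (simp only: kernel_transform_diff_cnj[OF T_pos] diag_coeff_def weight_def complex_norm_square of_real_mult)
  then show ?thesis
    using True by (simp add: quad_term_def diff_term_def sum_term_def mult.commute)
qed (simp add: quad_term_def diff_term_def sum_term_def)

lemma quad_form_decomp:
  "quad_form T w D n0 N = of_real (\<Sum>n\<in>{n0..<N}. diag_coeff n * (cmod (D n))\<^sup>2)
      + (\<Sum>n\<in>{n0..<N}. \<Sum>m\<in>{n0..<N}. diff_term D n m + sum_term D n m)"
proof -
  have "quad_form T w D n0 N
          = (\<Sum>n\<in>{n0..<N}. \<Sum>m\<in>{n0..<N}. if n = m then of_real (diag_coeff n * (cmod (D n))\<^sup>2) else 0)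
            + (\<Sum>n\<in>{n0..<N}. \<Sum>m\<in>{n0..<N}. diff_term D n m + sum_term D n m)"
    unfolding quad_form_def quad_term_decomp by (simp add: sum.distrib add.assoc)
  also have "(\<Sum>n\<in>{n0..<N}. \<Sum>m\<in>{n0..<N}. if n = m then of_real (diag_coeff n * (cmod (D n))\<^sup>2) else 0)
               = (\<Sum>n\<in>{n0..<N}. of_real (diag_coeff n * (cmod (D n))\<^sup>2) :: complex)"
    by (intro sum.cong refl) (simp add: sum.delta)
  finally show ?thesis by simp
qed

lemma Re_quad_form_bounds:
  fixes D :: "nat \<Rightarrow> complex" and N :: nat
  defines "d \<equiv> \<Sum>n\<in>{n0..<N}. diag_coeff n * (cmod (D n))\<^sup>2"
    and "r \<equiv> b * row_bound * (\<Sum>n\<in>{n0..<N}. weighted_sq D n)"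
  shows "d - r \<le> Re (quad_form T w D n0 N)" "Re (quad_form T w D n0 N) \<le> d + r"
proof -
  define X where "X = (\<Sum>n\<in>{n0..<N}. \<Sum>m\<in>{n0..<N}. diff_term D n m + sum_term D n m)"
  have "cmod X \<le> (\<Sum>n\<in>{n0..<N}. \<Sum>m\<in>{n0..<N}. cmod (diff_term D n m) + cmod (sum_term D n m))"
    unfolding X_def
    by (rule order.trans[OF norm_sum sum_mono], rule order.trans[OF norm_sum sum_mono], rule norm_triangle_ineq)
  then have "\<bar>Re X\<bar> \<le> r"
    using abs_Re_le_cmod[of X] off_diagonal_norm_le[of D N] unfolding r_def by linarith
  moreover have "Re (quad_form T w D n0 N) = d + Re X"
    by (simp add: quad_form_decomp d_def X_def)
  ultimately show "d - r \<le> Re (quad_form T w D n0 N)" "Re (quad_form T w D n0 N) \<le> d + r"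
    by linarith+
qed

lemma sum_norm_quad_term_le:
  "(\<Sum>n\<in>{n0..<N}. \<Sum>m\<in>{n0..<N}. cmod (quad_term T w D n m))
     \<le> (T / pi + b * row_bound) * (\<Sum>n\<in>{n0..<N}. weighted_sq D n)"
proof -
  have "cmod (quad_term T w D n m) \<le> (if n = m then diag_coeff n * (cmod (D n))\<^sup>2 else 0)
          + (cmod (diff_term D n m) + cmod (sum_term D n m))" for n m
  proof (cases "n = m")
    case True
    have "cmod (x + y + z) \<le> cmod x + (cmod y + cmod z)" for x y z :: complex
      using norm_triangle_ineq[of "x + y" z] norm_triangle_ineq[of x y] by linarith
    moreover have "cmod (of_real (diag_coeff n * (cmod (D n))\<^sup>2) :: complex) = diag_coeff n * (cmod (D n))\<^sup>2"
      unfolding norm_of_real using diag_coeff_nonneg[of n] by simp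
    ultimately show ?thesis
      unfolding quad_term_decomp if_P[OF True] by metis
  qed (simp add: quad_term_decomp norm_triangle_ineq)
  then have "(\<Sum>n\<in>{n0..<N}. \<Sum>m\<in>{n0..<N}. cmod (quad_term T w D n m))
      \<le> (\<Sum>n\<in>{n0..<N}. \<Sum>m\<in>{n0..<N}. (if n = m then diag_coeff n * (cmod (D n))\<^sup>2 else 0)
          + (cmod (diff_term D n m) + cmod (sum_term D n m)))"
    by (intro sum_mono)
  also have "\<dots> = (\<Sum>n\<in>{n0..<N}. diag_coeff n * (cmod (D n))\<^sup>2)
          + (\<Sum>n\<in>{n0..<N}. \<Sum>m\<in>{n0..<N}. cmod (diff_term D n m) + cmod (sum_term D n m))"
    by (simp add: sum.distrib sum.delta)
  finally have "(\<Sum>n\<in>{n0..<N}. \<Sum>m\<in>{n0..<N}. cmod (quad_term T w D n m))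
      \<le> (\<Sum>n\<in>{n0..<N}. diag_coeff n * (cmod (D n))\<^sup>2) + b * row_bound * (\<Sum>n\<in>{n0..<N}. weighted_sq D n)"
    using off_diagonal_norm_le[of D N] by linarith
  moreover have "diag_coeff n * (cmod (D n))\<^sup>2 \<le> T / pi * weighted_sq D n" for n
    unfolding weighted_sq_def using diag_coeff_le[of n] by (metis mult.assoc mult_right_mono zero_le_power2)
  then have "(\<Sum>n\<in>{n0..<N}. diag_coeff n * (cmod (D n))\<^sup>2) \<le> T / pi * (\<Sum>n\<in>{n0..<N}. weighted_sq D n)"
    unfolding sum_distrib_left by (rule sum_mono)
  ultimately show ?thesis by (simp add: algebra_simps)
qed

lemma quad_form_convergent:
  assumes "\<And>N. (\<Sum>n\<in>{n0..<N}. weighted_sq D n) \<le> Y"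
  shows "convergent (quad_form T w D n0)"
proof -
  have "convergent (\<lambda>N. \<Sum>p\<in>{n0..<N} \<times> {n0..<N}. quad_term T w D (fst p) (snd p))"
  proof (rule convergent_sum_incseq)
    show "incseq (\<lambda>N. {n0..<N} \<times> {n0..<N})"
      by (auto simp: incseq_def)
    show "(\<Sum>p\<in>{n0..<N} \<times> {n0..<N}. cmod (quad_term T w D (fst p) (snd p)))
            \<le> (T / pi + b * row_bound) * Y" for N
    proof -
      have "(\<Sum>p\<in>{n0..<N} \<times> {n0..<N}. cmod (quad_term T w D (fst p) (snd p)))
              = (\<Sum>n\<in>{n0..<N}. \<Sum>m\<in>{n0..<N}. cmod (quad_term T w D n m))"
        by (simp add: sum.cartesian_product split_def)
      also have "\<dots> \<le> (T / pi + b * row_bound) * (\<Sum>n\<in>{n0..<N}. weighted_sq D n)"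
        by (rule sum_norm_quad_term_le)
      also have "\<dots> \<le> (T / pi + b * row_bound) * Y"
        using assms T_pos b_pos row_bound_nonneg by (intro mult_left_mono) auto
      finally show ?thesis .
    qed
  qed auto
  then show ?thesis
    by (simp add: quad_form_def[abs_def] sum.cartesian_product split_def)
qed

lemma weight_le:
  assumes "\<bar>Im (w n)\<bar> \<le> B"
  shows "weight n \<le> 1 + exp (2 * B * T)"
proof -
  have "- Im (w n) * T \<le> B * T" using assms T_pos by (intro mult_right_mono) auto
  then have "- 2 * Im (w n) * T \<le> 2 * B * T" by linarith
  then show ?thesis by (simp add: weight_def)
qed

lemma diag_term_le:
  assumes "(cmod c)\<^sup>2 \<le> \<sigma>"
  shows "(2 * diag_coeff n * (1 - 2 * \<sigma>) - 2 * b * row_bound * weight n * (1 + 2 * \<sigma>)) * (cmod C)\<^sup>2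
           \<le> 2 * (diag_coeff n * (cmod C)\<^sup>2 - b * row_bound * weight n * (cmod C)\<^sup>2)
              - 4 * (diag_coeff n * (cmod (c * C))\<^sup>2 + b * row_bound * weight n * (cmod (c * C))\<^sup>2)"
proof -
  have "(cmod (c * C))\<^sup>2 \<le> \<sigma> * (cmod C)\<^sup>2"
    using assms by (simp add: norm_mult power_mult_distrib mult_right_mono)
  moreover have "0 \<le> diag_coeff n" "0 \<le> b * row_bound * weight n"
    using diag_coeff_nonneg b_pos row_bound_nonneg weight_pos[of n] by auto
  ultimately have "diag_coeff n * (cmod (c * C))\<^sup>2 \<le> diag_coeff n * (\<sigma> * (cmod C)\<^sup>2)"
    "b * row_bound * weight n * (cmod (c * C))\<^sup>2 \<le> b * row_bound * weight n * (\<sigma> * (cmod C)\<^sup>2)"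
    by (simp_all add: mult_left_mono)
  then show ?thesis by (simp add: algebra_simps)
qed

lemma integral_ge_diag_sum:
  assumes c: "\<And>n. n \<ge> n0 \<Longrightarrow> (cmod (c n))\<^sup>2 \<le> \<sigma>"
  shows "(\<Sum>n\<in>{n0..<N}. (2 * diag_coeff n * (1 - 2 * \<sigma>) - 2 * b * row_bound * weight n * (1 + 2 * \<sigma>))
            * (cmod (C n))\<^sup>2)
         \<le> integral {0..} (\<lambda>t. kfun T t * ((cmod (psum w C n0 N t))\<^sup>2
                                          - 2 * (cmod (psum w (\<lambda>n. c n * C n) n0 N t))\<^sup>2))"
proof -
  let ?cC = "\<lambda>n. c n * C n"
  have "(\<Sum>n\<in>{n0..<N}. (2 * diag_coeff n * (1 - 2 * \<sigma>) - 2 * b * row_bound * weight n * (1 + 2 * \<sigma>))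
            * (cmod (C n))\<^sup>2)
      \<le> (\<Sum>n\<in>{n0..<N}. 2 * (diag_coeff n * (cmod (C n))\<^sup>2 - b * row_bound * weighted_sq C n)
        - 4 * (diag_coeff n * (cmod (?cC n))\<^sup>2 + b * row_bound * weighted_sq ?cC n))"
    unfolding weighted_sq_def using diag_term_le c by (intro sum_mono) (simp add: mult.assoc)
  also have "\<dots> = 2 * ((\<Sum>n\<in>{n0..<N}. diag_coeff n * (cmod (C n))\<^sup>2) - b * row_bound * (\<Sum>n\<in>{n0..<N}. weighted_sq C n))
        - 4 * ((\<Sum>n\<in>{n0..<N}. diag_coeff n * (cmod (?cC n))\<^sup>2) + b * row_bound * (\<Sum>n\<in>{n0..<N}. weighted_sq ?cC n))"
    by (simp add: sum_subtractf sum.distrib sum_distrib_left algebra_simps)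
  also have "\<dots> \<le> 2 * Re (quad_form T w C n0 N) - 4 * Re (quad_form T w ?cC n0 N)"
    using Re_quad_form_bounds(1)[of C N] Re_quad_form_bounds(2)[of ?cC N]
    by (intro diff_mono mult_left_mono) auto
  also have "\<dots> = integral {0..} (\<lambda>t. kfun T t * ((cmod (psum w C n0 N t))\<^sup>2
                                          - 2 * (cmod (psum w ?cC n0 N t))\<^sup>2))"
    by (rule integral_kfun_psum_difference[OF T_pos, symmetric])
  finally show ?thesis .
qed

lemma integral_convergent:
  assumes C: "summable (\<lambda>n. (cmod (C n))\<^sup>2)" and c: "\<And>n. n \<ge> n0 \<Longrightarrow> cmod (c n) \<le> 1"
    and B: "\<And>n. n \<ge> n0 \<Longrightarrow> \<bar>Im (w n)\<bar> \<le> B"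
  shows "convergent (\<lambda>N. integral {0..} (\<lambda>t. kfun T t * ((cmod (psum w C n0 N t))\<^sup>2
                                          - 2 * (cmod (psum w (\<lambda>n. c n * C n) n0 N t))\<^sup>2)))"
proof -
  define Y where "Y = (1 + exp (2 * B * T)) * (\<Sum>n. (cmod (C n))\<^sup>2)"
  have Y_bound: "(\<Sum>n\<in>{n0..<N}. weighted_sq D n) \<le> Y"
    if "\<And>n. n \<ge> n0 \<Longrightarrow> cmod (D n) \<le> cmod (C n)" for D N
  proof -
    have "(\<Sum>n\<in>{n0..<N}. weighted_sq D n) \<le> (\<Sum>n\<in>{n0..<N}. (1 + exp (2 * B * T)) * (cmod (C n))\<^sup>2)"
      unfolding weighted_sq_def using weight_le[OF B] weight_pos that
      by (intro sum_mono mult_mono power_mono) (auto simp: less_imp_le)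
    also have "\<dots> \<le> Y"
      unfolding Y_def sum_distrib_left[symmetric]
      by (intro mult_left_mono sum_le_suminf[OF C]) (auto intro: add_nonneg_nonneg)
    finally show ?thesis .
  qed
  have "convergent (quad_form T w C n0)"
    by (rule quad_form_convergent, rule Y_bound) simp
  moreover have "convergent (quad_form T w (\<lambda>n. c n * C n) n0)"
    by (rule quad_form_convergent, rule Y_bound) (use c in \<open>simp add: norm_mult mult_left_le_one_le\<close>)
  ultimately obtain L1 L2 where "quad_form T w C n0 \<longlonglongrightarrow> L1"
    and "quad_form T w (\<lambda>n. c n * C n) n0 \<longlonglongrightarrow> L2"
    unfolding convergent_def by blast
  then have "(\<lambda>N. 2 * Re (quad_form T w C n0 N) - 4 * Re (quad_form T w (\<lambda>n. c n * C n) n0 N))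
               \<longlonglongrightarrow> 2 * Re L1 - 4 * Re L2"
    by (intro tendsto_intros)
  then show ?thesis
    unfolding integral_kfun_psum_difference[OF T_pos] convergent_def by blast
qed

end

locale calibrated_frequencies = separated_frequencies +
  fixes \<epsilon> \<gamma> :: real
  assumes eps_pos: "0 < \<epsilon>" and eps_less_1: "\<epsilon> < 1" and gamma_pos: "0 < \<gamma>"
    and g_eq: "g = \<gamma> * (1 - \<epsilon> / 16)" and R0_ge: "2 * \<gamma>\<^sup>2 / (\<epsilon> * g) \<le> R0"
begin

definition "target_coeff n =
  ((1 - \<epsilon>) / (pi\<^sup>2 + 4 * T\<^sup>2 * (Im (w n))\<^sup>2) - 4 * (1 + \<epsilon>) / (T\<^sup>2 * \<gamma>\<^sup>2)) * weight n"

lemma row_bound_le: "row_bound \<le> (4 + 2 * \<epsilon>) / \<gamma>\<^sup>2"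
proof -
  have "2 * \<gamma>\<^sup>2 \<le> \<epsilon> * (g * R0)"
    using R0_ge g_pos eps_pos by (simp add: field_simps)
  then have "2 / (g * R0) \<le> \<epsilon> / \<gamma>\<^sup>2"
    using g_pos g_le_R0 gamma_pos by (simp add: field_simps)
  moreover have "4 / g\<^sup>2 \<le> (4 + \<epsilon>) / \<gamma>\<^sup>2"
  proof -
    have "(4 + \<epsilon>) * (1 - \<epsilon> / 16)\<^sup>2 - 4 = \<epsilon> * ((1/2 - 7 * \<epsilon> / 64) + \<epsilon>\<^sup>2 / 256)"
      by (simp add: power2_eq_square field_simps)
    also have "\<dots> \<ge> 0" using eps_pos eps_less_1 by (intro mult_nonneg_nonneg add_nonneg_nonneg) auto
    finally have "4 * \<gamma>\<^sup>2 \<le> (4 + \<epsilon>) * g\<^sup>2"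
      using mult_right_mono[of 4 "(4 + \<epsilon>) * (1 - \<epsilon> / 16)\<^sup>2" "\<gamma>\<^sup>2"]
      by (simp add: g_eq power_mult_distrib mult_ac)
    then show ?thesis using g_pos gamma_pos by (simp add: field_simps)
  qed
  ultimately show ?thesis by (simp add: row_bound_def add_divide_distrib)
qed

lemma target_coeff_eq:
  "2 * pi * T * target_coeff n = 2 * diag_coeff n * (1 - \<epsilon>) - 2 * b * weight n * (4 * (1 + \<epsilon>) / \<gamma>\<^sup>2)"
proof -
  define P where "P = pi\<^sup>2 + 4 * T\<^sup>2 * (Im (w n))\<^sup>2"
  define q where "q = 4 * (1 + \<epsilon>) / (T\<^sup>2 * \<gamma>\<^sup>2)"
  have "0 < P" by (simp add: P_def add_pos_nonneg)
  have "pi * T * q = b * (4 * (1 + \<epsilon>) / \<gamma>\<^sup>2)"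
    using T_pos gamma_pos by (simp add: q_def b_def field_simps power2_eq_square)
  moreover have "2 * pi * T * target_coeff n
                   = 2 * (pi * T * weight n / P) * (1 - \<epsilon>) - 2 * (pi * T * q) * weight n"
    unfolding target_coeff_def P_def[symmetric] q_def[symmetric]
    using \<open>0 < P\<close> by (simp add: field_simps)
  ultimately show ?thesis unfolding diag_coeff_def P_def[symmetric] by (simp add: algebra_simps)
qed

lemma target_coeff_le:
  assumes "0 \<le> \<sigma>" "\<sigma> \<le> \<epsilon> / 8"
  shows "2 * pi * T * target_coeff n
           \<le> 2 * diag_coeff n * (1 - 2 * \<sigma>) - 2 * b * row_bound * weight n * (1 + 2 * \<sigma>)"
proof -
  have "1 - \<epsilon> \<le> 1 - 2 * \<sigma>" using assms by linarith
  then have "2 * diag_coeff n * (1 - \<epsilon>) \<le> 2 * diag_coeff n * (1 - 2 * \<sigma>)"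
    using diag_coeff_nonneg[of n] by (intro mult_left_mono) auto
  moreover have "row_bound * (1 + 2 * \<sigma>) \<le> 4 * (1 + \<epsilon>) / \<gamma>\<^sup>2"
  proof -
    have "row_bound * (1 + 2 * \<sigma>) \<le> ((4 + 2 * \<epsilon>) / \<gamma>\<^sup>2) * (1 + \<epsilon> / 4)"
      using row_bound_le row_bound_nonneg assms by (intro mult_mono) auto
    also have "\<dots> \<le> 4 * (1 + \<epsilon>) / \<gamma>\<^sup>2"
    proof -
      have "(4 + 2 * \<epsilon>) * (1 + \<epsilon> / 4) \<le> 4 * (1 + \<epsilon>)"
        using eps_pos eps_less_1 by (simp add: field_simps power2_eq_square mult_left_le)
      then show ?thesis by (simp add: divide_right_mono)
    qed
    finally show ?thesis .
  qed
  then have "2 * b * weight n * (row_bound * (1 + 2 * \<sigma>)) \<le> 2 * b * weight n * (4 * (1 + \<epsilon>) / \<gamma>\<^sup>2)"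
    using b_pos weight_pos[of n] by (intro mult_left_mono) auto
  ultimately show ?thesis unfolding target_coeff_eq by (simp add: algebra_simps)
qed

lemma integral_ge_target_sum:
  assumes c: "\<And>n. n \<ge> n0 \<Longrightarrow> cmod (c n) \<le> \<epsilon> / 8"
  shows "2 * pi * T * (\<Sum>n\<in>{n0..<N}. target_coeff n * (cmod (C n))\<^sup>2)
         \<le> integral {0..} (\<lambda>t. kfun T t * ((cmod (psum w C n0 N t))\<^sup>2
                                          - 2 * (cmod (psum w (\<lambda>n. c n * C n) n0 N t))\<^sup>2))"
proof -
  have c2: "(cmod (c n))\<^sup>2 \<le> \<epsilon> / 8" if "n \<ge> n0" for n
  proof -
    have "cmod (c n) * cmod (c n) \<le> cmod (c n) * 1"
      using c[OF that] eps_less_1 by (intro mult_left_mono) auto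
    then show ?thesis using c[OF that] by (simp add: power2_eq_square)
  qed
  have "2 * pi * T * (\<Sum>n\<in>{n0..<N}. target_coeff n * (cmod (C n))\<^sup>2)
     \<le> (\<Sum>n\<in>{n0..<N}. (2 * diag_coeff n * (1 - 2 * (\<epsilon> / 8))
                         - 2 * b * row_bound * weight n * (1 + 2 * (\<epsilon> / 8))) * (cmod (C n))\<^sup>2)"
    unfolding sum_distrib_left mult.assoc[symmetric]
    using target_coeff_le[of "\<epsilon> / 8"] eps_pos
    by (intro sum_mono mult_right_mono) auto
  also have "\<dots> \<le> integral {0..} (\<lambda>t. kfun T t * ((cmod (psum w C n0 N t))\<^sup>2
                                          - 2 * (cmod (psum w (\<lambda>n. c n * C n) n0 N t))\<^sup>2))"
    using c2 by (rule integral_ge_diag_sum)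
  finally show ?thesis .
qed

lemma summable_target_coeff:
  assumes C: "summable (\<lambda>n. (cmod (C n))\<^sup>2)"
    and B: "\<And>n. n \<ge> n0 \<Longrightarrow> \<bar>Im (w n)\<bar> \<le> B"
  shows "summable (\<lambda>m. target_coeff (m + n0) * (cmod (C (m + n0)))\<^sup>2)"
proof (rule summable_comparison_test)
  define q where "q = 4 * (1 + \<epsilon>) / (T\<^sup>2 * \<gamma>\<^sup>2)"
  define K where "K = (1 / pi\<^sup>2 + q) * (1 + exp (2 * B * T))"
  show "summable (\<lambda>m. K * (cmod (C (m + n0)))\<^sup>2)"
    by (intro summable_mult summable_ignore_initial_segment C)
  have "\<bar>target_coeff n\<bar> \<le> K" if "n \<ge> n0" for n
  proof -
    define P where "P = pi\<^sup>2 + 4 * T\<^sup>2 * (Im (w n))\<^sup>2"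
    have "pi\<^sup>2 \<le> P" by (simp add: P_def)
    moreover have "0 < P" by (simp add: P_def add_pos_nonneg)
    ultimately have "0 \<le> (1 - \<epsilon>) / P" "(1 - \<epsilon>) / P \<le> 1 / pi\<^sup>2"
      using eps_pos eps_less_1 by (auto intro!: frac_le)
    moreover have "0 \<le> q" using eps_pos by (simp add: q_def)
    ultimately have "\<bar>(1 - \<epsilon>) / P - q\<bar> \<le> 1 / pi\<^sup>2 + q" by linarith
    then show ?thesis
      unfolding target_coeff_def K_def P_def[symmetric] q_def[symmetric] abs_mult
      using weight_le[OF B[OF that]] weight_pos[of n]
      by (intro mult_mono) auto
  qed
  then show "\<exists>N. \<forall>m\<ge>N. norm (target_coeff (m + n0) * (cmod (C (m + n0)))\<^sup>2)
                         \<le> K * (cmod (C (m + n0)))\<^sup>2"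
    by (auto simp: abs_mult intro!: mult_right_mono)
qed

lemma integral_limit_ge_target_sum:
  assumes C: "summable (\<lambda>n. (cmod (C n))\<^sup>2)" and c: "\<And>n. n \<ge> n0 \<Longrightarrow> cmod (c n) \<le> \<epsilon> / 8"
    and B: "\<And>n. n \<ge> n0 \<Longrightarrow> \<bar>Im (w n)\<bar> \<le> B"
  shows "\<exists>L. (\<lambda>N. integral {0..} (\<lambda>t. kfun T t * ((cmod (psum w C n0 N t))\<^sup>2
                                          - 2 * (cmod (psum w (\<lambda>n. c n * C n) n0 N t))\<^sup>2))) \<longlonglongrightarrow> L
           \<and> 2 * pi * T * (\<Sum>m. target_coeff (m + n0) * (cmod (C (m + n0)))\<^sup>2) \<le> L"
proof -
  have "cmod (c n) \<le> 1" if "n \<ge> n0" for n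
    using c[OF that] eps_less_1 by simp
  then obtain L where L: "(\<lambda>N. integral {0..} (\<lambda>t. kfun T t * ((cmod (psum w C n0 N t))\<^sup>2
                                          - 2 * (cmod (psum w (\<lambda>n. c n * C n) n0 N t))\<^sup>2))) \<longlonglongrightarrow> L"
    using integral_convergent[OF C _ B] unfolding convergent_def by blast
  moreover have "2 * pi * T * (\<Sum>m. target_coeff (m + n0) * (cmod (C (m + n0)))\<^sup>2) \<le> L"
    using L integral_ge_target_sum[OF c] summable_target_coeff[OF C B] by (rule suminf_shift_le_limit)
  ultimately show ?thesis by blast
qed

end

section \<open>Choice of the threshold\<close>

lemma separated_tail_exists:
  fixes w :: "nat \<Rightarrow> complex"
  assumes liminf: "ereal g < liminf (\<lambda>n. ereal (Re (w (Suc n)) - Re (w n)))" and "0 < g" "g \<le> R"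
  obtains n0 where "N \<le> n0" "separated_sequence w g R n0"
proof -
  obtain N1 where N1: "\<And>n. N1 \<le> n \<Longrightarrow> g < Re (w (Suc n)) - Re (w n)"
    using less_LiminfD[OF liminf] by (auto simp: eventually_sequentially)
  define n1 where "n1 = max N N1"
  define k where "k = nat \<lceil>(R - Re (w n1)) / g\<rceil>"
  have gaps: "Re (w n) + g \<le> Re (w (Suc n))" if "n1 \<le> n" for n
    using N1[of n] that by (simp add: n1_def)
  have "(R - Re (w n1)) / g \<le> real k"
    unfolding k_def by (rule real_nat_ceiling_ge)
  then have "R \<le> Re (w n1) + real k * g"
    using \<open>0 < g\<close> by (simp add: pos_divide_le_eq)
  also have "\<dots> \<le> Re (w (n1 + k))"
    using Re_ge_of_gaps[of n1 w g n1 "n1 + k"] gaps by simp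
  finally have "R \<le> Re (w (n1 + k))" .
  moreover have "Re (w n) + g \<le> Re (w (Suc n))" if "n1 + k \<le> n" for n
    using gaps that by simp
  ultimately show thesis
    using assms(2,3) by (intro that[of "n1 + k"]) (auto simp: n1_def separated_sequence_def)
qed

lemma two_pi_div_le_of_T_gt:
  assumes "0 < \<gamma>" "0 < \<epsilon>" "\<epsilon> < 1" and T: "2 * pi / (\<gamma> * sqrt (1 - \<epsilon>)) < T"
  shows "0 < T" "2 * (pi / T) \<le> \<gamma> * (1 - \<epsilon> / 16)"
proof -
  have pos: "0 < \<gamma> * sqrt (1 - \<epsilon>)" using assms(1,3) by simp
  then show "0 < T" using T by (smt (verit) divide_pos_pos pi_gt_zero)
  have "1 - \<epsilon> \<le> (1 - \<epsilon> / 16)\<^sup>2"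
    using assms(2) by (simp add: power2_eq_square algebra_simps)
  then have "sqrt (1 - \<epsilon>) \<le> 1 - \<epsilon> / 16"
    using assms(3) real_sqrt_le_mono[of "1 - \<epsilon>" "(1 - \<epsilon> / 16)\<^sup>2"] by simp
  have "2 * pi < T * (\<gamma> * sqrt (1 - \<epsilon>))" using T pos by (simp add: divide_less_eq)
  then have "2 * (pi / T) < \<gamma> * sqrt (1 - \<epsilon>)"
    using \<open>0 < T\<close> by (simp add: divide_less_eq mult.commute)
  also have "\<dots> \<le> \<gamma> * (1 - \<epsilon> / 16)"
    using \<open>sqrt (1 - \<epsilon>) \<le> 1 - \<epsilon> / 16\<close> assms(1) by (intro mult_left_mono) auto
  finally show "2 * (pi / T) \<le> \<gamma> * (1 - \<epsilon> / 16)" by simp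
qed

theorem lemma5p6:
  fixes \<omega> c :: "nat \<Rightarrow> complex" and \<gamma> M :: real
  assumes nz: "\<forall>n\<ge>1. \<omega> n \<noteq> 0"
    and gap: "liminf (\<lambda>n. ereal (Re (\<omega> (Suc n)) - Re (\<omega> n))) = ereal \<gamma>"
    and gpos: "\<gamma> > 0"
    and bdd: "\<exists>B. \<forall>n\<ge>1. \<bar>Im (\<omega> n)\<bar> \<le> B"
    and Mpos: "M > 0"
    and cbd: "\<forall>n\<ge>1. cmod (c n) \<le> M / cmod (\<omega> n)"
  shows "\<forall>\<epsilon>. 0 < \<epsilon> \<and> \<epsilon> < 1 \<longrightarrow>
          (\<exists>n0\<ge>1. \<forall>T. T > 2 * pi / (\<gamma> * sqrt (1 - \<epsilon>)) \<longrightarrow>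
             (\<forall>C :: nat \<Rightarrow> complex. summable (\<lambda>n. (cmod (C n))\<^sup>2) \<longrightarrow>
               (\<exists>L. (\<lambda>N. integral {0..} (\<lambda>t. kfun T t *
                        ((cmod (psum \<omega> C n0 N t))\<^sup>2
                         - 2 * (cmod (psum \<omega> (\<lambda>n. c n * C n) n0 N t))\<^sup>2)))
                      \<longlonglongrightarrow> L
                  \<and> L \<ge> 2 * pi * T * (\<Sum>m. let n = m + n0 in
                        ((1 - \<epsilon>) / (pi\<^sup>2 + 4 * T\<^sup>2 * (Im (\<omega> n))\<^sup>2)
                          - 4 * (1 + \<epsilon>) / (T\<^sup>2 * \<gamma>\<^sup>2))
                        * (1 + exp (- 2 * Im (\<omega> n) * T)) * (cmod (C n))\<^sup>2))))"
proof (intro allI impI, goal_cases)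
  case (1 \<epsilon>)
  text \<open>\<open>g < \<gamma>\<close> is a gap that holds eventually; \<open>R0 \<ge> 2\<gamma>\<^sup>2/(\<epsilon> g)\<close> bounds the row sums of the
    off-diagonal kernels by \<open>(4 + 2\<epsilon>)/\<gamma>\<^sup>2\<close>, and \<open>R0 \<ge> 8M/\<epsilon>\<close> gives \<open>|c n| \<le> \<epsilon>/8\<close>.\<close>
  define g where "g = \<gamma> * (1 - \<epsilon> / 16)"
  define R0 where "R0 = max g (max (2 * \<gamma>\<^sup>2 / (\<epsilon> * g)) (8 * M / \<epsilon>))"
  have R0_ge: "g \<le> R0" "2 * \<gamma>\<^sup>2 / (\<epsilon> * g) \<le> R0" "8 * M / \<epsilon> \<le> R0"
    by (simp_all add: R0_def)
  have "ereal g < liminf (\<lambda>n. ereal (Re (\<omega> (Suc n)) - Re (\<omega> n)))" "0 < g"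
    using gpos 1 by (auto simp: g_def gap)
  then obtain n0 where "1 \<le> n0" and "separated_sequence \<omega> g R0 n0"
    using R0_ge(1) by (rule separated_tail_exists[where N = 1]) blast
  then interpret separated_sequence \<omega> g R0 n0 by simp
  have c_small: "cmod (c n) \<le> \<epsilon> / 8" if "n0 \<le> n" for n
  proof -
    have "cmod (c n) \<le> M / R0"
      using cbd that \<open>1 \<le> n0\<close> Mpos by (intro norm_le_div_R0[of _ M n]) auto
    also have "\<dots> \<le> \<epsilon> / 8"
      using R0_ge(3) 1 g_pos g_le_R0 by (simp add: field_simps)
    finally show ?thesis .
  qed
  obtain B where "\<forall>n\<ge>1. \<bar>Im (\<omega> n)\<bar> \<le> B" using bdd by blast
  then have B: "\<bar>Im (\<omega> n)\<bar> \<le> B" if "n0 \<le> n" for n using that \<open>1 \<le> n0\<close> by simp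
  show ?case
  proof (intro exI[of _ n0] conjI allI impI, goal_cases)
    case (2 T C)
    interpret calibrated_frequencies \<omega> g R0 n0 T \<epsilon> \<gamma>
      using two_pi_div_le_of_T_gt[OF gpos _ _ "2"(1)] 1 gpos R0_ge(2) g_def by unfold_locales auto
    show ?case
      using integral_limit_ge_target_sum[OF "2"(2) c_small B]
      by (simp add: target_coeff_def weight_def Let_def)
  qed (use \<open>1 \<le> n0\<close> in simp)
qed

end
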